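(* Let $\mathfrak{A}$ be an architecture, $\Sigma$ a finite alphabet and $k\ge1$. There is a deterministic bottom-up tree automaton $\mathcal{A}^{k\text{-stw}}_{\mathsf{acyclic}}$ with $2^{\mathcal{O}(k^2)}$ states which accepts all binary trees $\tau$ such that $\tau$ is a $k$-STT and $G_\tau$ is acyclic.
   Context: Architecture $\mathfrak{A}=(\mathsf{Procs},\mathsf{DS},\mathsf{Writer},\mathsf{Reader})$ with finite sets of processes and data structures. Edge labels are $\Gamma=\{\to\}\cup\mathsf{DS}$ and vertex labels are pairs in $\Sigma\times\mathsf{Procs}$. For $k\ge1$, $k$-STTs are $\tau::=(i,a,p)\mid\mathsf{Add}^\gamma_{i,j}\tau\mid\mathsf{Forget}_i\tau\mid\tau\oplus\tau$ with $a\in\Sigma,p\in\mathsf{Procs},\gamma\in\Gamma,i,j\in[k]$. Semantics $[\![\tau]\!]=(G_\tau,\chi_\tau)$, $G_\tau$ a labelled graph and $\chi_\tau:[k]\to V$ partial injective: $(i,a,p)$ is one vertex labelled $(a,p)$ colored $i$; $\mathsf{Add}^\gamma_{i,j}$ adds the edge $(\chi(i),\chi(j))$ with label $\gamma$ if $i,j\in\mathrm{dom}(\chi)$ (nothing otherwise); $\mathsf{Forget}_i$ removes $i$ from $\mathrm{dom}(\chi)$; $\tau_1\oplus\tau_2$ is the disjoint union, defined (i.e. the term is a legal $k$-STT) only if the color domains are disjoint. Terms are regarded as binary trees over the alphabet $\{\oplus,(i,a,p),\mathsf{Add}^\gamma_{i,j},\mathsf{Forget}_i\}$ (leaves atomic,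 unary nodes $\mathsf{Add}/\mathsf{Forget}$, binary nodes $\oplus$). $G_\tau$ is acyclic if the union of all its edge relations has no cycle. The size of a tree automaton is its number of states. *)

theory Defs
  imports Main
begin

(* Edge labels Gamma = {->} \<union> DS *)
datatype 'd elab = ProcEdge | DSEdge 'd

(* k-STT terms as ranked (binary) trees over the alphabet
   {Plus, (i,a,p), Add^g_{i,j}, Forget_i}; colors are natural numbers,
   the color set is [k] = {1..k}. *)
datatype ('a, 'p, 'd) stt =
    Atom nat 'a 'p
  | AddE "'d elab" nat nat "('a, 'p, 'd) stt"
  | Forget nat "('a, 'p, 'd) stt"
  | Plus "('a, 'p, 'd) stt" "('a, 'p, 'd) stt"

fun over_k :: "nat \<Rightarrow> ('a, 'p, 'd) stt \<Rightarrow> bool" where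
  "over_k k (Atom i a p) = (i \<in> {1..k})"
| "over_k k (AddE g i j t) = (i \<in> {1..k} \<and> j \<in> {1..k} \<and> over_k k t)"
| "over_k k (Forget i t) = (i \<in> {1..k} \<and> over_k k t)"
| "over_k k (Plus t u) = (over_k k t \<and> over_k k u)"

(* Semantics: vertices are positions (bool lists) of atoms in the tree;
   result = (vertices, labelled edges, vertex labelling, coloring chi). *)
type_synonym ('a, 'p, 'd) sem =
  "bool list set \<times> ('d elab \<times> bool list \<times> bool list) set
   \<times> (bool list \<Rightarrow> ('a \<times> 'p) option) \<times> (nat \<Rightarrow> bool list option)"

fun sem :: "('a, 'p, 'd) stt \<Rightarrow> ('a, 'p, 'd) sem" where
  "sem (Atom i a p) = ({[]}, {}, [[] \<mapsto> (a, p)], [i \<mapsto> []])"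
| "sem (AddE g i j t) =
     (let (V, E, lab, chi) = sem t in
      (V, (if i \<in> dom chi \<and> j \<in> dom chi
           then insert (g, the (chi i), the (chi j)) E else E), lab, chi))"
| "sem (Forget i t) =
     (let (V, E, lab, chi) = sem t in (V, E, lab, chi(i := None)))"
| "sem (Plus t u) =
     (let (V1, E1, lab1, chi1) = sem t; (V2, E2, lab2, chi2) = sem u in
      ((Cons False) ` V1 \<union> (Cons True) ` V2,
       (\<lambda>(g, x, y). (g, False # x, False # y)) ` E1
         \<union> (\<lambda>(g, x, y). (g, True # x, True # y)) ` E2,
       (\<lambda>v. case v of [] \<Rightarrow> None | False # w \<Rightarrow> lab1 w | True # w \<Rightarrow> lab2 w),
       (\<lambda>c. case chi1 c of Some v \<Rightarrow> Some (False # v)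
                           | None \<Rightarrow> map_option (Cons True) (chi2 c))))"

definition chi_of :: "('a, 'p, 'd) stt \<Rightarrow> nat \<Rightarrow> bool list option" where
  "chi_of t = (case sem t of (V, E, lab, chi) \<Rightarrow> chi)"

definition edges_of :: "('a, 'p, 'd) stt \<Rightarrow> ('d elab \<times> bool list \<times> bool list) set" where
  "edges_of t = (case sem t of (V, E, lab, chi) \<Rightarrow> E)"

fun legal :: "('a, 'p, 'd) stt \<Rightarrow> bool" where
  "legal (Atom i a p) = True"
| "legal (AddE g i j t) = legal t"
| "legal (Forget i t) = legal t"
| "legal (Plus t u) = (legal t \<and> legal u \<and> dom (chi_of t) \<inter> dom (chi_of u) = {})"

definition is_kSTT :: "nat \<Rightarrow> ('a, 'p, 'd) stt \<Rightarrow> bool" where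
  "is_kSTT k t \<longleftrightarrow> over_k k t \<and> legal t"

definition graph_acyclic :: "('a, 'p, 'd) stt \<Rightarrow> bool" where
  "graph_acyclic t \<longleftrightarrow> acyclic {(x, y). \<exists>g. (g, x, y) \<in> edges_of t}"

datatype 'd usym = UAdd "'d elab" nat nat | UForget nat

fun dta_run :: "(nat \<Rightarrow> 'a \<Rightarrow> 'p \<Rightarrow> nat) \<Rightarrow> ('d usym \<Rightarrow> nat \<Rightarrow> nat)
                 \<Rightarrow> (nat \<Rightarrow> nat \<Rightarrow> nat) \<Rightarrow> ('a, 'p, 'd) stt \<Rightarrow> nat" where
  "dta_run d0 d1 d2 (Atom i a p) = d0 i a p"
| "dta_run d0 d1 d2 (AddE g i j t) = d1 (UAdd g i j) (dta_run d0 d1 d2 t)"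
| "dta_run d0 d1 d2 (Forget i t) = d1 (UForget i) (dta_run d0 d1 d2 t)"
| "dta_run d0 d1 d2 (Plus t u) = d2 (dta_run d0 d1 d2 t) (dta_run d0 d1 d2 u)"

definition dta_wf :: "nat \<Rightarrow> nat set \<Rightarrow> (nat \<Rightarrow> 'a \<Rightarrow> 'p \<Rightarrow> nat) \<Rightarrow> ('d usym \<Rightarrow> nat \<Rightarrow> nat)
                      \<Rightarrow> (nat \<Rightarrow> nat \<Rightarrow> nat) \<Rightarrow> nat set \<Rightarrow> bool" where
  "dta_wf k Q d0 d1 d2 F \<longleftrightarrow> finite Q \<and> F \<subseteq> Q
     \<and> (\<forall>i\<in>{1..k}. \<forall>a p. d0 i a p \<in> Q)
     \<and> (\<forall>g. \<forall>i\<in>{1..k}. \<forall>j\<in>{1..k}. \<forall>q\<in>Q. d1 (UAdd g i j) q \<in> Q)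
     \<and> (\<forall>i\<in>{1..k}. \<forall>q\<in>Q. d1 (UForget i) q \<in> Q)
     \<and> (\<forall>q\<in>Q. \<forall>q'\<in>Q. d2 q q' \<in> Q)"

end

theory Submission
  imports Defs
begin

text \<open>The automaton reads a term bottom-up and keeps, as long as the term is legal and its
graph acyclic, only the reachability relation between the currently coloured vertices,
transported to their colours: a relation on \<open>[k]\<close>, hence one of \<open>2^(k^2)\<close> values, plus a
rejecting sink.  This is enough to maintain itself: an edge from colour \<open>i\<close> to colour \<open>j\<close>
closes a cycle exactly when \<open>j\<close> already reaches \<open>i\<close>, and afterwards \<open>x\<close> reaches \<open>y\<close> iff it
did before or \<open>x\<close> reaches \<open>i\<close> and \<open>j\<close> reaches \<open>y\<close>; a disjoint union neither creates cycles
nor connects its two sides, and it is illegal exactly when both sides use a common colour,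
which is visible on the diagonals of the two relations; forgetting a colour just drops it
from the relation.\<close>

subsection \<open>The edge relation of a term\<close>

definition edge_rel :: "('a, 'p, 'd) stt \<Rightarrow> (bool list \<times> bool list) set" where
  "edge_rel t = {(x, y). \<exists>g. (g, x, y) \<in> edges_of t}"

definition tag_rel :: "'b \<Rightarrow> ('b list \<times> 'b list) set \<Rightarrow> ('b list \<times> 'b list) set" where
  "tag_rel b r = map_prod (Cons b) (Cons b) ` r"

lemma chi_of_Atom: "chi_of (Atom i a p) = [i \<mapsto> []]"
  by (simp add: chi_of_def)

lemma chi_of_AddE: "chi_of (AddE g i j t) = chi_of t"
  by (simp add: chi_of_def split: prod.splits)

lemma chi_of_Forget: "chi_of (Forget i t) = (chi_of t)(i := None)"
  by (simp add: chi_of_def split: prod.splits)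

lemma chi_of_Plus:
  "chi_of (Plus t u) = (\<lambda>c. case chi_of t c of
      Some v \<Rightarrow> Some (False # v) | None \<Rightarrow> map_option (Cons True) (chi_of u c))"
  unfolding chi_of_def by (simp split: prod.splits)

lemma edge_rel_Atom: "edge_rel (Atom i a p) = {}"
  by (simp add: edge_rel_def edges_of_def)

lemma edge_rel_AddE:
  "edge_rel (AddE g i j t) =
     (if i \<in> dom (chi_of t) \<and> j \<in> dom (chi_of t)
      then insert (the (chi_of t i), the (chi_of t j)) (edge_rel t) else edge_rel t)"
  by (auto simp: edge_rel_def edges_of_def chi_of_def split: prod.splits)

lemma edge_rel_Forget: "edge_rel (Forget i t) = edge_rel t"
  by (simp add: edge_rel_def edges_of_def split: prod.splits)

lemma edge_rel_Plus: "edge_rel (Plus t u) = tag_rel False (edge_rel t) \<union> tag_rel True (edge_rel u)"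
  by (auto simp: edge_rel_def edges_of_def tag_rel_def split: prod.splits; force)

subsection \<open>Disjoint unions of relations\<close>

lemma mem_tag_rel_iff: "(p, q) \<in> tag_rel b r \<longleftrightarrow> (\<exists>x y. p = b # x \<and> q = b # y \<and> (x, y) \<in> r)"
  by (auto simp: tag_rel_def)

lemma rtrancl_tagged_union_from:
  assumes "(p, q) \<in> (tag_rel False r\<^sub>1 \<union> tag_rel True r\<^sub>2)\<^sup>*" and "p = b # x"
  shows "\<exists>y. q = b # y \<and> (x, y) \<in> (if b then r\<^sub>2 else r\<^sub>1)\<^sup>*"
  using assms
proof (induction rule: rtrancl_induct)
  case base
  then show ?case by simp
next
  case (step q q')
  then show ?case
    by (auto simp: tag_rel_def split: if_splits intro: rtrancl_into_rtrancl)
qed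

lemma rtrancl_tagged_union_into:
  assumes "(x, y) \<in> (if b then r\<^sub>2 else r\<^sub>1)\<^sup>*"
  shows "(b # x, b # y) \<in> (tag_rel False r\<^sub>1 \<union> tag_rel True r\<^sub>2)\<^sup>*"
  using assms
proof (induction rule: rtrancl_induct)
  case base
  then show ?case by simp
next
  case (step y z)
  then have "(b # y, b # z) \<in> tag_rel False r\<^sub>1 \<union> tag_rel True r\<^sub>2"
    by (cases b) (auto simp: tag_rel_def)
  with step.IH show ?case by (rule rtrancl_into_rtrancl)
qed

lemma rtrancl_tagged_union_iff:
  "(b # x, c # y) \<in> (tag_rel False r\<^sub>1 \<union> tag_rel True r\<^sub>2)\<^sup>* \<longleftrightarrow>
     b = c \<and> (x, y) \<in> (if b then r\<^sub>2 else r\<^sub>1)\<^sup>*"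
  using rtrancl_tagged_union_from[of "b # x" "c # y" r\<^sub>1 r\<^sub>2 b x]
    rtrancl_tagged_union_into[of x y b r\<^sub>2 r\<^sub>1]
  by auto

lemma acyclic_iff_no_return: "acyclic r \<longleftrightarrow> (\<forall>x y. (x, y) \<in> r \<longrightarrow> (y, x) \<notin> r\<^sup>*)"
  by (auto simp: acyclic_def trancl_unfold_left)

lemma acyclic_tagged_union_iff:
  "acyclic (tag_rel False r\<^sub>1 \<union> tag_rel True r\<^sub>2) \<longleftrightarrow> acyclic r\<^sub>1 \<and> acyclic r\<^sub>2"
  (is "acyclic ?U \<longleftrightarrow> _")
proof -
  have "(\<forall>p q. (p, q) \<in> ?U \<longrightarrow> (q, p) \<notin> ?U\<^sup>*) \<longleftrightarrow>
      (\<forall>x y. (x, y) \<in> r\<^sub>1 \<longrightarrow> (y, x) \<notin> r\<^sub>1\<^sup>*) \<and> (\<forall>x y. (x, y) \<in> r\<^sub>2 \<longrightarrow> (y, x) \<notin> r\<^sub>2\<^sup>*)"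
  proof (intro iffI conjI allI impI)
    fix x y
    assume no_return: "\<forall>p q. (p, q) \<in> ?U \<longrightarrow> (q, p) \<notin> ?U\<^sup>*"
    show "(y, x) \<notin> r\<^sub>1\<^sup>*" if "(x, y) \<in> r\<^sub>1"
      using that no_return[rule_format, of "False # x" "False # y"]
      by (auto simp: mem_tag_rel_iff rtrancl_tagged_union_iff)
    show "(y, x) \<notin> r\<^sub>2\<^sup>*" if "(x, y) \<in> r\<^sub>2"
      using that no_return[rule_format, of "True # x" "True # y"]
      by (auto simp: mem_tag_rel_iff rtrancl_tagged_union_iff)
  next
    fix p q
    assume "(\<forall>x y. (x, y) \<in> r\<^sub>1 \<longrightarrow> (y, x) \<notin> r\<^sub>1\<^sup>*) \<and> (\<forall>x y. (x, y) \<in> r\<^sub>2 \<longrightarrow> (y, x) \<notin> r\<^sub>2\<^sup>*)"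
      and "(p, q) \<in> ?U"
    then show "(q, p) \<notin> ?U\<^sup>*"
      by (auto simp: mem_tag_rel_iff rtrancl_tagged_union_iff)
  qed
  then show ?thesis
    by (simp add: acyclic_iff_no_return)
qed

subsection \<open>Reachability between colours\<close>

definition color_reach :: "('a, 'p, 'd) stt \<Rightarrow> (nat \<times> nat) set" where
  "color_reach t = {(c, c'). \<exists>v v'. chi_of t c = Some v \<and> chi_of t c' = Some v' \<and>
                               (v, v') \<in> (edge_rel t)\<^sup>*}"

lemma diag_color_reach_iff: "(c, c) \<in> color_reach t \<longleftrightarrow> c \<in> dom (chi_of t)"
  by (auto simp: color_reach_def)

lemma color_reach_Atom: "color_reach (Atom i a p) = {(i, i)}"
  by (auto simp: color_reach_def chi_of_Atom edge_rel_Atom split: if_splits)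

lemma color_reach_Forget:
  "color_reach (Forget i t) = {(c, c'). (c, c') \<in> color_reach t \<and> c \<noteq> i \<and> c' \<noteq> i}"
  by (auto simp: color_reach_def chi_of_Forget edge_rel_Forget)

lemma
  assumes "chi_of t i = Some v" and "chi_of t j = Some v'"
  shows color_reach_AddE_live:
      "color_reach (AddE g i j t) =
         color_reach t \<union> {(c, c'). (c, i) \<in> color_reach t \<and> (j, c') \<in> color_reach t}"
    and acyclic_edge_rel_AddE_live:
      "acyclic (edge_rel (AddE g i j t)) \<longleftrightarrow>
         acyclic (edge_rel t) \<and> (j, i) \<notin> color_reach t"
proof -
  have edges: "edge_rel (AddE g i j t) = insert (v, v') (edge_rel t)"
    using assms by (simp add: edge_rel_AddE domI)
  show "color_reach (AddE g i j t) =
      color_reach t \<union> {(c, c'). (c, i) \<in> color_reach t \<and> (j, c') \<in> color_reach t}"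
    unfolding color_reach_def chi_of_AddE edges rtrancl_insert using assms by auto
  show "acyclic (edge_rel (AddE g i j t)) \<longleftrightarrow> acyclic (edge_rel t) \<and> (j, i) \<notin> color_reach t"
    using assms by (simp add: edges color_reach_def)
qed

lemma color_reach_AddE_dead:
  "i \<notin> dom (chi_of t) \<or> j \<notin> dom (chi_of t) \<Longrightarrow> color_reach (AddE g i j t) = color_reach t"
  by (auto simp: color_reach_def chi_of_AddE edge_rel_AddE)

lemma color_reach_Plus:
  assumes "dom (chi_of t) \<inter> dom (chi_of u) = {}"
  shows "color_reach (Plus t u) = color_reach t \<union> color_reach u"
  using assms
  by (auto simp: color_reach_def chi_of_Plus edge_rel_Plus rtrancl_tagged_union_iff
           split: option.splits)

lemma acyclic_edge_rel_Plus:
  "acyclic (edge_rel (Plus t u)) \<longleftrightarrow> acyclic (edge_rel t) \<and> acyclic (edge_rel u)"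
  by (simp add: edge_rel_Plus acyclic_tagged_union_iff)

subsection \<open>The automaton\<close>

definition acyc_state :: "('a, 'p, 'd) stt \<Rightarrow> (nat \<times> nat) set option" where
  "acyc_state t = (if legal t \<and> acyclic (edge_rel t) then Some (color_reach t) else None)"

definition acyc_leaf :: "nat \<Rightarrow> 'a \<Rightarrow> 'p \<Rightarrow> (nat \<times> nat) set option" where
  "acyc_leaf i a p = Some {(i, i)}"

fun acyc_unary :: "'d usym \<Rightarrow> (nat \<times> nat) set option \<Rightarrow> (nat \<times> nat) set option" where
  "acyc_unary s None = None"
| "acyc_unary (UAdd g i j) (Some R) =
     (if (i, i) \<in> R \<and> (j, j) \<in> R then
        (if (j, i) \<in> R then None else Some (R \<union> {(c, c'). (c, i) \<in> R \<and> (j, c') \<in> R}))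
      else Some R)"
| "acyc_unary (UForget i) (Some R) = Some {(c, c'). (c, c') \<in> R \<and> c \<noteq> i \<and> c' \<noteq> i}"

fun acyc_plus :: "(nat \<times> nat) set option \<Rightarrow> (nat \<times> nat) set option \<Rightarrow> (nat \<times> nat) set option"
  where
  "acyc_plus (Some R) (Some R') =
     (if \<exists>c. (c, c) \<in> R \<and> (c, c) \<in> R' then None else Some (R \<union> R'))"
| "acyc_plus _ _ = None"

fun stt_run :: "(nat \<Rightarrow> 'a \<Rightarrow> 'p \<Rightarrow> 's) \<Rightarrow> ('d usym \<Rightarrow> 's \<Rightarrow> 's) \<Rightarrow> ('s \<Rightarrow> 's \<Rightarrow> 's)
                \<Rightarrow> ('a, 'p, 'd) stt \<Rightarrow> 's" where
  "stt_run d0 d1 d2 (Atom i a p) = d0 i a p"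
| "stt_run d0 d1 d2 (AddE g i j t) = d1 (UAdd g i j) (stt_run d0 d1 d2 t)"
| "stt_run d0 d1 d2 (Forget i t) = d1 (UForget i) (stt_run d0 d1 d2 t)"
| "stt_run d0 d1 d2 (Plus t u) = d2 (stt_run d0 d1 d2 t) (stt_run d0 d1 d2 u)"

lemma acyc_leaf_Atom: "acyc_leaf i a p = acyc_state (Atom i a p)"
  by (simp add: acyc_leaf_def acyc_state_def color_reach_Atom edge_rel_Atom acyclic_def)

lemma acyc_unary_AddE: "acyc_unary (UAdd g i j) (acyc_state t) = acyc_state (AddE g i j t)"
proof (cases "legal t \<and> acyclic (edge_rel t)")
  case False
  then show ?thesis
    by (auto simp: acyc_state_def edge_rel_AddE acyclic_subset[of _ "edge_rel t"])
next
  case True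
  show ?thesis
  proof (cases "i \<in> dom (chi_of t) \<and> j \<in> dom (chi_of t)")
    case False
    with True show ?thesis
      by (auto simp: acyc_state_def diag_color_reach_iff color_reach_AddE_dead edge_rel_AddE)
  next
    case live: True
    then obtain v v' where "chi_of t i = Some v" "chi_of t j = Some v'" by auto
    with True live show ?thesis
      by (simp add: acyc_state_def diag_color_reach_iff color_reach_AddE_live
                    acyclic_edge_rel_AddE_live)
  qed
qed

lemma acyc_unary_Forget: "acyc_unary (UForget i) (acyc_state t) = acyc_state (Forget i t)"
  by (simp add: acyc_state_def color_reach_Forget edge_rel_Forget)

lemma acyc_plus_Plus: "acyc_plus (acyc_state t) (acyc_state u) = acyc_state (Plus t u)"
proof (cases "legal t \<and> acyclic (edge_rel t) \<and> legal u \<and> acyclic (edge_rel u)")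
  case False
  then show ?thesis by (auto simp: acyc_state_def acyclic_edge_rel_Plus)
next
  case True
  then show ?thesis
    by (auto simp: acyc_state_def diag_color_reach_iff color_reach_Plus acyclic_edge_rel_Plus)
qed

theorem stt_run_acyc: "stt_run acyc_leaf acyc_unary acyc_plus t = acyc_state t"
  by (induction t)
     (simp_all add: acyc_leaf_Atom acyc_unary_AddE acyc_unary_Forget acyc_plus_Plus)

subsection \<open>Finite state spaces\<close>

definition transitions_closed ::
  "nat \<Rightarrow> 's set \<Rightarrow> (nat \<Rightarrow> 'a \<Rightarrow> 'p \<Rightarrow> 's) \<Rightarrow> ('d usym \<Rightarrow> 's \<Rightarrow> 's) \<Rightarrow> ('s \<Rightarrow> 's \<Rightarrow> 's) \<Rightarrow> bool"
  where
  "transitions_closed k S d0 d1 d2 \<longleftrightarrow>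
     (\<forall>i\<in>{1..k}. \<forall>a p. d0 i a p \<in> S)
     \<and> (\<forall>g. \<forall>i\<in>{1..k}. \<forall>j\<in>{1..k}. \<forall>q\<in>S. d1 (UAdd g i j) q \<in> S)
     \<and> (\<forall>i\<in>{1..k}. \<forall>q\<in>S. d1 (UForget i) q \<in> S)
     \<and> (\<forall>q\<in>S. \<forall>q'\<in>S. d2 q q' \<in> S)"

lemma stt_run_closed:
  "transitions_closed k S d0 d1 d2 \<Longrightarrow> over_k k t \<Longrightarrow> stt_run d0 d1 d2 t \<in> S"
  by (induction t) (simp_all add: transitions_closed_def)

lemma dta_renumber_states:
  fixes S :: "'s set" and acc :: "'s \<Rightarrow> bool"
    and d0 :: "nat \<Rightarrow> 'a \<Rightarrow> 'p \<Rightarrow> 's" and d1 :: "'d usym \<Rightarrow> 's \<Rightarrow> 's"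
  assumes "finite S" and closed: "transitions_closed k S d0 d1 d2"
  shows "\<exists>(Q::nat set) e0 e1 e2 F. dta_wf k Q e0 e1 e2 F \<and> card Q = card S \<and>
     (\<forall>t :: ('a, 'p, 'd) stt. over_k k t \<longrightarrow>
        (dta_run e0 e1 e2 t \<in> F \<longleftrightarrow> acc (stt_run d0 d1 d2 t)))"
proof -
  obtain enc where bij: "bij_betw enc S {0..<card S}"
    using ex_bij_betw_finite_nat[OF \<open>finite S\<close>] by blast
  define dec where "dec = inv_into S enc"
  have inj: "inj_on enc S" and enc: "q \<in> S \<Longrightarrow> enc q \<in> {0..<card S}" for q
    using bij by (auto simp: bij_betw_def)
  have dec: "n \<in> {0..<card S} \<Longrightarrow> dec n \<in> S" for n
    unfolding dec_def using bij by (metis bij_betw_def inv_into_into)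
  have dec_enc: "q \<in> S \<Longrightarrow> dec (enc q) = q" for q
    unfolding dec_def using inj by simp
  define e0 where "e0 i a p = enc (d0 i a p)" for i a p
  define e1 where "e1 s n = enc (d1 s (dec n))" for s n
  define e2 where "e2 n n' = enc (d2 (dec n) (dec n'))" for n n'
  define F where "F = enc ` {q \<in> S. acc q}"
  have run: "over_k k t \<Longrightarrow> dta_run e0 e1 e2 t = enc (stt_run d0 d1 d2 t)"
    for t :: "('a, 'p, 'd) stt"
    by (induction t) (simp_all add: e0_def e1_def e2_def dec_enc stt_run_closed[OF closed])
  have "dta_wf k {0..<card S} e0 e1 e2 F"
    using closed enc dec by (auto simp: dta_wf_def transitions_closed_def e0_def e1_def e2_def F_def)
  moreover have "dta_run e0 e1 e2 t \<in> F \<longleftrightarrow> acc (stt_run d0 d1 d2 t)"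
    if "over_k k t" for t :: "('a, 'p, 'd) stt"
    using run[OF that] stt_run_closed[OF closed that] inj
    by (auto simp: F_def inj_on_image_mem_iff)
  ultimately show ?thesis by fastforce
qed

definition acyc_states :: "nat \<Rightarrow> (nat \<times> nat) set option set" where
  "acyc_states k = insert None (Some ` Pow ({1..k} \<times> {1..k}))"

lemma finite_acyc_states: "finite (acyc_states k)"
  by (simp add: acyc_states_def)

lemma card_acyc_states: "card (acyc_states k) = Suc (2 ^ (k * k))"
proof -
  have "card (Some ` Pow ({1..k} \<times> {1..k})) = 2 ^ (k * k)"
    by (simp add: card_image card_Pow card_cartesian_product)
  then show ?thesis
    by (auto simp: acyc_states_def card_insert_if)
qed

lemma transitions_closed_acyc:
  "transitions_closed k (acyc_states k)
     (acyc_leaf :: nat \<Rightarrow> 'a \<Rightarrow> 'p \<Rightarrow> _) (acyc_unary :: 'd usym \<Rightarrow> _) acyc_plus"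
  unfolding transitions_closed_def
proof (intro conjI ballI allI)
  fix i and a :: 'a and p :: 'p
  show "acyc_leaf i a p \<in> acyc_states k" if "i \<in> {1..k}"
    using that by (simp add: acyc_leaf_def acyc_states_def)
next
  fix g :: "'d elab" and i j q
  assume "i \<in> {1..k}" "j \<in> {1..k}" "q \<in> acyc_states k"
  then show "acyc_unary (UAdd g i j) q \<in> acyc_states k"
    by (cases q) (auto simp: acyc_states_def image_iff)
next
  fix i q
  assume "q \<in> acyc_states k"
  then show "acyc_unary (UForget i) q \<in> acyc_states k"
    by (cases q) (auto simp: acyc_states_def image_iff)
next
  fix q q'
  assume "q \<in> acyc_states k" "q' \<in> acyc_states k"
  then show "acyc_plus q q' \<in> acyc_states k"
    by (cases q; cases q') (auto simp: acyc_states_def image_iff)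
qed

lemma Suc_pow_square_le: "k \<ge> 1 \<Longrightarrow> Suc (2 ^ (k * k)) \<le> (2::nat) ^ (2 * k ^ 2)"
proof -
  assume "k \<ge> 1"
  then have two_le: "(2::nat) \<le> 2 ^ (k * k)"
    using power_increasing[of 1 "k * k" "2::nat"] by simp
  then have "Suc (2 ^ (k * k)) \<le> 2 * (2::nat) ^ (k * k)"
    by simp
  also have "\<dots> \<le> 2 ^ (k * k) * 2 ^ (k * k)"
    using two_le by (rule mult_le_mono1)
  also have "\<dots> = 2 ^ (2 * k ^ 2)"
    by (simp add: power2_eq_square mult_2 power_add)
  finally show ?thesis .
qed

theorem mainTheorem9:
  "\<exists>c::nat. \<forall>k::nat. k \<ge> 1 \<longrightarrow>
     (\<exists>(Q::nat set) d0 d1 d2 F.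
        dta_wf k Q d0 d1 d2 F \<and> card Q \<le> 2 ^ (c * k ^ 2) \<and>
        (\<forall>t :: ('a::finite, 'p::finite, 'd::finite) stt. over_k k t \<longrightarrow>
           (dta_run d0 d1 d2 t \<in> F \<longleftrightarrow> is_kSTT k t \<and> graph_acyclic t)))"
proof (intro exI[of _ 2] allI impI)
  fix k :: nat
  assume "k \<ge> 1"
  obtain Q d0 d1 d2 F where wf: "dta_wf k Q d0 d1 d2 F"
    and card: "card Q = card (acyc_states k)"
    and run: "\<forall>t :: ('a, 'p, 'd) stt. over_k k t \<longrightarrow>
       (dta_run d0 d1 d2 t \<in> F \<longleftrightarrow> stt_run acyc_leaf acyc_unary acyc_plus t \<noteq> None)"
    using dta_renumber_states[OF finite_acyc_states transitions_closed_acyc,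
            where acc = "\<lambda>q. q \<noteq> None"]
    by blast
  have "card Q \<le> 2 ^ (2 * k ^ 2)"
    using card card_acyc_states Suc_pow_square_le[OF \<open>k \<ge> 1\<close>] by simp
  moreover have "stt_run acyc_leaf acyc_unary acyc_plus t \<noteq> None \<longleftrightarrow>
      is_kSTT k t \<and> graph_acyclic t" if "over_k k t" for t :: "('a, 'p, 'd) stt"
    using that by (simp add: stt_run_acyc acyc_state_def is_kSTT_def graph_acyclic_def edge_rel_def)
  ultimately show "\<exists>(Q::nat set) d0 d1 d2 F.
        dta_wf k Q d0 d1 d2 F \<and> card Q \<le> 2 ^ (2 * k ^ 2) \<and>
        (\<forall>t :: ('a, 'p, 'd) stt. over_k k t \<longrightarrow>
           (dta_run d0 d1 d2 t \<in> F \<longleftrightarrow> is_kSTT k t \<and> graph_acyclic t))"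
    using wf run by blast
qed

end
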